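(* Let $g:[0,1]\to\mathbb{R}$ and let $0<c_1<c_2<\dots<c_r<1$ ($r<\infty$) be points such that $g$ is twice differentiable with bounded second derivative on $[0,1]$ except at the points $c_j$, which are jump discontinuities at which both one-sided limits $g(c_j-)$, $g(c_j+)$ exist and are finite. (i) If $g$ is left-continuous at each $c_j$, then as $n\to\infty$ \[ \sum_{k=1}^{n-1} g\left(\frac kn\right)=n\int_0^1 g(x)\,dx-\frac{g(0)+g(1)}{2}+\sum_{j=1}^r\left(\{nc_j\}-\frac12\right)\left[g(c_j+)-g(c_j-)\right]+\mathcal{O}\left(\frac1n\right), \] where $\{x\}=x-\lfloor x\rfloor$. (ii) If $g$ is right-continuous at $c_j$, then the same formula holds with $\{nc_j\}$ replaced by $\{nc_j\}'$, where $\{x\}'=1+x-\lceil x\rceil$ (the fractional part of $x$, except that it equals $1$ when $x$ is an integer). *)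

theory Defs
  imports "HOL-Analysis.Analysis" "HOL-Library.Landau_Symbols"
begin

definition frac' :: "real \<Rightarrow> real" where
  "frac' x = 1 + x - real_of_int \<lceil>x\<rceil>"

end

theory Submission
  imports Defs
begin

text \<open>
  Subtract from \<open>g\<close>, at each \<open>c\<^sub>j\<close>, a step of height \<open>g(c\<^sub>j+) - g(c\<^sub>j-)\<close> whose value at
  \<open>c\<^sub>j\<close> itself is \<open>g(c\<^sub>j) - g(c\<^sub>j-)\<close>. What remains is a function \<open>h\<close> that is continuous on
  \<open>[0,1]\<close> and twice differentiable with bounded second derivative away from the \<open>c\<^sub>j\<close>, so
  its composite trapezoid error is \<open>O(1/n)\<close>: a cell of width \<open>1/n\<close> free of the \<open>c\<^sub>j\<close>
  contributes \<open>O(n\<^sup>-\<^sup>3)\<close>, and each of the at most \<open>2r\<close> cells meeting some \<open>c\<^sub>j\<close>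
  contributes \<open>O(n\<^sup>-\<^sup>2)\<close> because \<open>h\<close> is Lipschitz. For a single step the Riemann sum
  counts the nodes \<open>k/n\<close> to the right of \<open>c\<^sub>j\<close>, which yields \<open>({n c\<^sub>j} - 1/2)\<close> times
  the jump; a node falling on \<open>c\<^sub>j\<close> is counted exactly when \<open>g\<close> is right-continuous
  there, which is where \<open>{x}'\<close> replaces \<open>{x}\<close>.
\<close>

section \<open>Functions with a bounded derivative off a finite set\<close>

lemma abs_diff_le_of_deriv_bound:
  fixes f f' :: "real \<Rightarrow> real"
  assumes "a \<le> b"
    and "\<And>x. x \<in> {a..b} \<Longrightarrow> (f has_real_derivative f' x) (at x within {a..b})"
    and "\<And>x. x \<in> {a..b} \<Longrightarrow> \<bar>f' x\<bar> \<le> B"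
  shows "\<bar>f b - f a\<bar> \<le> B * (b - a)"
  using field_differentiable_bound[of "{a..b}" f f' B b a] assms by simp

lemma lipschitz_of_deriv_bound_off_finite:
  fixes h h' :: "real \<Rightarrow> real"
  assumes "finite C" and cont: "continuous_on {a..b} h"
    and deriv: "\<And>x. x \<in> {a..b} - C \<Longrightarrow> (h has_real_derivative h' x) (at x within {a..b})"
    and bound: "\<And>x. x \<in> {a..b} - C \<Longrightarrow> \<bar>h' x\<bar> \<le> B"
    and "x \<in> {a..b}" "y \<in> {a..b}"
  shows "\<bar>h x - h y\<bar> \<le> B * \<bar>x - y\<bar>"
proof -
  have "\<bar>h v - h u\<bar> \<le> B * (v - u)" if uv: "u \<in> {a..b}" "v \<in> {a..b}" "u < v" for u v
  proof -
    have "\<not> {u<..<v} \<subseteq> C"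
      using \<open>finite C\<close> \<open>u < v\<close> finite_subset by (metis infinite_Ioo)
    then obtain z where "z \<in> {u<..<v} - C" by blast
    then have "0 \<le> B"
      using bound[of z] uv by force
    have "(h' has_integral (h v - h u)) {u..v}"
    proof (rule fundamental_theorem_of_calculus_interior_strong[OF \<open>finite C\<close>])
      show "continuous_on {u..v} h"
        using cont uv by (auto elim: continuous_on_subset)
      fix t assume t: "t \<in> {u<..<v} - C"
      then have "at t within {a..b} = at t"
        using uv by (intro at_within_interior) auto
      then show "(h has_vector_derivative h' t) (at t)"
        using deriv[of t] t uv by (simp add: has_real_derivative_iff_has_vector_derivative)
    qed (use uv in auto)
    then show ?thesis
      using has_integral_bound_spike_finite[OF \<open>0 \<le> B\<close> \<open>finite C\<close>, of h' _ u v] bound uv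
      by auto
  qed
  from this[of x y] this[of y x] show ?thesis
    using assms(5,6) by (cases x y rule: linorder_cases) (auto simp: abs_minus_commute)
qed

lemma segment_to_gap_midpoint:
  fixes C :: "real set"
  assumes "finite C" and x: "x \<in> {a..b} - C"
  obtains l r where "l \<in> insert a C" and "r \<in> insert b C"
    and "{min x ((l + r) / 2)..max x ((l + r) / 2)} \<subseteq> {a..b} - C"
proof -
  define L where "L = Max (insert a {z\<in>C. z < x})"
  define R where "R = Min (insert b {z\<in>C. x < z})"
  have "L \<in> insert a {z\<in>C. z < x}"
    using \<open>finite C\<close> unfolding L_def by (intro Max_in) auto
  moreover have "R \<in> insert b {z\<in>C. x < z}"
    using \<open>finite C\<close> unfolding R_def by (intro Min_in) auto
  ultimately have "L \<in> insert a C" "R \<in> insert b C"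
    by auto
  have L: "a \<le> L" "L \<le> x" "\<And>z. z \<in> C \<Longrightarrow> z < x \<Longrightarrow> z \<le> L"
    using \<open>finite C\<close> x unfolding L_def by (auto intro: Max_ge simp: Max_le_iff)
  have R: "R \<le> b" "x \<le> R" "\<And>z. z \<in> C \<Longrightarrow> x < z \<Longrightarrow> R \<le> z"
    using \<open>finite C\<close> x unfolding R_def by (auto intro: Min_le simp: Min_ge_iff)
  have "{min x ((L + R) / 2)..max x ((L + R) / 2)} \<subseteq> {a..b} - C"
  proof
    fix z assume z: "z \<in> {min x ((L + R) / 2)..max x ((L + R) / 2)}"
    have "z \<notin> C"
    proof
      assume "z \<in> C"
      then have "z \<noteq> x"
        using x by auto
      then have "L < z \<and> z < R"
        using z L(2) R(2) by (auto simp: min_def max_def split: if_splits)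
      then show False
        using L(3)[OF \<open>z \<in> C\<close>] R(3)[OF \<open>z \<in> C\<close>] \<open>z \<noteq> x\<close> by force
    qed
    then show "z \<in> {a..b} - C"
      using z L(1,2) R(1,2) by (auto simp: min_def max_def split: if_splits)
  qed
  with \<open>L \<in> insert a C\<close> \<open>R \<in> insert b C\<close> show ?thesis
    by (rule that)
qed

lemma bounded_deriv_off_finite:
  fixes h' h'' :: "real \<Rightarrow> real"
  assumes "finite C"
    and deriv: "\<And>x. x \<in> {a..b} - C \<Longrightarrow> (h' has_real_derivative h'' x) (at x within {a..b})"
    and bound: "\<And>x. x \<in> {a..b} - C \<Longrightarrow> \<bar>h'' x\<bar> \<le> M"
  obtains B where "\<And>x. x \<in> {a..b} - C \<Longrightarrow> \<bar>h' x\<bar> \<le> B"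
proof -
  \<comment> \<open>\<open>h'\<close> is \<open>M\<close>-Lipschitz on the segment from \<open>x\<close> to the midpoint of its gap in \<open>C \<union> {a, b}\<close>,
    and there are only finitely many such midpoints.\<close>
  define P where "P = (\<lambda>(l, r). (l + r) / 2) ` (insert a C \<times> insert b C)"
  have "\<bar>h' x\<bar> \<le> \<bar>M\<bar> * (b - a) + (\<Sum>p\<in>P. \<bar>h' p\<bar>)" if x: "x \<in> {a..b} - C" for x
  proof -
    obtain l r where "l \<in> insert a C" "r \<in> insert b C"
      and segment: "{min x ((l + r) / 2)..max x ((l + r) / 2)} \<subseteq> {a..b} - C"
      using segment_to_gap_midpoint[OF \<open>finite C\<close> x] .
    define m where "m = (l + r) / 2"
    note segment = segment[folded m_def]
    have "m \<in> {min x m..max x m}"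
      by simp
    with segment have "m \<in> {a..b}"
      by blast
    have "\<bar>h' x - h' m\<bar> \<le> M * \<bar>x - m\<bar>"
      using field_differentiable_bound[of "{min x m..max x m}" h' h'' M x m] segment
        deriv bound DERIV_subset[of h' _ _ "{a..b}" "{min x m..max x m}"]
      by (auto simp: subset_iff)
    also have "\<dots> \<le> \<bar>M\<bar> * (b - a)"
      using x \<open>m \<in> {a..b}\<close> by (intro mult_mono) (auto simp: abs_le_iff)
    finally have "\<bar>h' x - h' m\<bar> \<le> \<bar>M\<bar> * (b - a)" .
    moreover have "\<bar>h' m\<bar> \<le> (\<Sum>p\<in>P. \<bar>h' p\<bar>)"
      using \<open>l \<in> insert a C\<close> \<open>r \<in> insert b C\<close> \<open>finite C\<close>
      unfolding P_def m_def by (intro member_le_sum) auto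
    ultimately show ?thesis
      by linarith
  qed
  then show ?thesis
    by (rule that)
qed

section \<open>The composite trapezoid rule\<close>

text \<open>\<open>F\<close> stands for an antiderivative of \<open>f\<close>: this is the error of the trapezoid rule on \<open>[a, b]\<close>.\<close>

definition trapezoid_cell_error :: "(real \<Rightarrow> real) \<Rightarrow> (real \<Rightarrow> real) \<Rightarrow> real \<Rightarrow> real \<Rightarrow> real"
  where "trapezoid_cell_error f F a b = (b - a) * (f a + f b) / 2 - (F b - F a)"

lemma trapezoid_cell_error_lipschitz:
  fixes f F :: "real \<Rightarrow> real"
  assumes "a \<le> b"
    and F: "\<And>t. t \<in> {a..b} \<Longrightarrow> (F has_real_derivative f t) (at t within {a..b})"
    and lip: "\<And>x y. x \<in> {a..b} \<Longrightarrow> y \<in> {a..b} \<Longrightarrow> \<bar>f x - f y\<bar> \<le> L * \<bar>x - y\<bar>"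
  shows "\<bar>trapezoid_cell_error f F a b\<bar> \<le> L * (b - a)^2 / 2"
proof -
  define \<psi> where "\<psi> t = t * (f a + f b) / 2 - F t" for t
  have "(\<psi> has_real_derivative (f a + f b) / 2 - f t) (at t within {a..b})" if "t \<in> {a..b}" for t
    unfolding \<psi>_def using F[OF that] by (auto intro!: derivative_eq_intros)
  moreover have "\<bar>(f a + f b) / 2 - f t\<bar> \<le> L * (b - a) / 2" if t: "t \<in> {a..b}" for t
  proof -
    have "\<bar>f a - f t\<bar> \<le> L * (t - a)" "\<bar>f b - f t\<bar> \<le> L * (b - t)"
      using lip[of a t] lip[of b t] t by auto
    then show ?thesis
      unfolding abs_le_iff by (auto simp: field_simps)
  qed
  ultimately have "\<bar>\<psi> b - \<psi> a\<bar> \<le> L * (b - a) / 2 * (b - a)"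
    by (intro abs_diff_le_of_deriv_bound \<open>a \<le> b\<close>)
  moreover have "\<psi> b - \<psi> a = trapezoid_cell_error f F a b"
    unfolding \<psi>_def trapezoid_cell_error_def by (simp add: field_simps)
  ultimately show ?thesis
    by (simp add: power2_eq_square)
qed

lemma trapezoid_cell_error_second_deriv:
  fixes f f' f'' F :: "real \<Rightarrow> real"
  assumes "a \<le> b"
    and F: "\<And>t. t \<in> {a..b} \<Longrightarrow> (F has_real_derivative f t) (at t within {a..b})"
    and f: "\<And>t. t \<in> {a..b} \<Longrightarrow> (f has_real_derivative f' t) (at t within {a..b})"
    and f': "\<And>t. t \<in> {a..b} \<Longrightarrow> (f' has_real_derivative f'' t) (at t within {a..b})"
    and bound: "\<And>t. t \<in> {a..b} \<Longrightarrow> \<bar>f'' t\<bar> \<le> M"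
  shows "\<bar>trapezoid_cell_error f F a b\<bar> \<le> M * (b - a)^3 / 2"
proof -
  have "0 \<le> M"
    using bound[of a] \<open>a \<le> b\<close> by force
  define \<rho> where "\<rho> t = (f a - f t + (t - a) * f' t) / 2" for t
  define \<phi> where "\<phi> t = trapezoid_cell_error f F a t" for t
  have \<rho>: "(\<rho> has_real_derivative (t - a) * f'' t / 2) (at t within {a..b})" if "t \<in> {a..b}" for t
    unfolding \<rho>_def using f[OF that] f'[OF that]
    by (auto intro!: derivative_eq_intros simp: field_simps)
  have "\<bar>\<rho> t\<bar> \<le> M * (b - a) / 2 * (b - a)" if t: "t \<in> {a..b}" for t
  proof -
    have "\<bar>\<rho> t - \<rho> a\<bar> \<le> M * (b - a) / 2 * (t - a)"
    proof (rule abs_diff_le_of_deriv_bound)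
      fix x assume x: "x \<in> {a..t}"
      then show "(\<rho> has_real_derivative (x - a) * f'' x / 2) (at x within {a..t})"
        using t by (intro DERIV_subset[OF \<rho>]) auto
      have "\<bar>(x - a) * f'' x / 2\<bar> = (x - a) * \<bar>f'' x\<bar> / 2"
        using x by (simp add: abs_mult)
      also have "\<dots> \<le> M * (b - a) / 2"
        using x t bound[of x] \<open>0 \<le> M\<close>
        by (intro divide_right_mono) (auto simp: mult.commute intro: mult_mono)
      finally show "\<bar>(x - a) * f'' x / 2\<bar> \<le> M * (b - a) / 2" .
    qed (use t in auto)
    also have "\<dots> \<le> M * (b - a) / 2 * (b - a)"
      using t \<open>0 \<le> M\<close> by (intro mult_left_mono) auto
    finally show ?thesis
      by (simp add: \<rho>_def)
  qed
  moreover have "(\<phi> has_real_derivative \<rho> t) (at t within {a..b})" if "t \<in> {a..b}" for t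
    unfolding \<phi>_def \<rho>_def trapezoid_cell_error_def using f[OF that] F[OF that]
    by (auto intro!: derivative_eq_intros simp: field_simps)
  ultimately have "\<bar>\<phi> b - \<phi> a\<bar> \<le> M * (b - a) / 2 * (b - a) * (b - a)"
    by (intro abs_diff_le_of_deriv_bound \<open>a \<le> b\<close>)
  then show ?thesis
    by (simp add: \<phi>_def trapezoid_cell_error_def power3_eq_cube)
qed

definition trapezoid_error :: "(real \<Rightarrow> real) \<Rightarrow> nat \<Rightarrow> real" where
  "trapezoid_error f n =
     (\<Sum>k=1..<n. f (real k / real n)) - (real n * integral {0..1} f - (f 0 + f 1) / 2)"

lemma trapezoid_error_add_sum:
  assumes "f integrable_on {0..1}" and "finite J" and "\<And>j. j \<in> J \<Longrightarrow> s j integrable_on {0..1}"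
  shows "trapezoid_error (\<lambda>x. f x + (\<Sum>j\<in>J. s j x)) n
           = trapezoid_error f n + (\<Sum>j\<in>J. trapezoid_error (s j) n)"
proof -
  have "integral {0..1} (\<lambda>x. f x + (\<Sum>j\<in>J. s j x))
      = integral {0..1} f + (\<Sum>j\<in>J. integral {0..1} (s j))"
    using assms by (simp add: integral_add integrable_sum integral_sum)
  moreover have "(\<Sum>k=1..<n. \<Sum>j\<in>J. s j (real k / real n)) = (\<Sum>j\<in>J. \<Sum>k=1..<n. s j (real k / real n))"
    by (rule sum.swap)
  ultimately show ?thesis
    unfolding trapezoid_error_def
    by (simp add: sum.distrib sum_subtractf sum_distrib_left sum_divide_distrib add_divide_distrib
        algebra_simps)
qed

lemma trapezoid_cell_error_le:
  fixes h h' h'' H :: "real \<Rightarrow> real"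
  assumes "finite C"
    and H: "\<And>t. t \<in> {0..1} \<Longrightarrow> (H has_real_derivative h t) (at t within {0..1})"
    and deriv: "\<And>x. x \<in> {0..1} - C \<Longrightarrow> (h has_real_derivative h' x) (at x within {0..1})"
    and deriv2: "\<And>x. x \<in> {0..1} - C \<Longrightarrow> (h' has_real_derivative h'' x) (at x within {0..1})"
    and bound: "\<And>x. x \<in> {0..1} - C \<Longrightarrow> \<bar>h'' x\<bar> \<le> M"
    and lip: "\<And>x y. x \<in> {0..1} \<Longrightarrow> y \<in> {0..1} \<Longrightarrow> \<bar>h x - h y\<bar> \<le> B * \<bar>x - y\<bar>"
    and "0 \<le> a" "a \<le> b" "b \<le> 1"
  shows "\<bar>trapezoid_cell_error h H a b\<bar>
           \<le> \<bar>M\<bar> * (b - a)^3 + \<bar>B\<bar> * (b - a)^2 * card {x\<in>C. x \<in> {a..b}}"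
proof -
  have sub: "{a..b} \<subseteq> {0..1}"
    using assms by auto
  have "0 \<le> (b - a)^2" "0 \<le> (b - a)^3"
    using \<open>a \<le> b\<close> by simp_all
  then have M_term: "0 \<le> \<bar>M\<bar> * (b - a)^3" "M * (b - a)^3 \<le> \<bar>M\<bar> * (b - a)^3"
    and B_term: "0 \<le> \<bar>B\<bar> * (b - a)^2" "B * (b - a)^2 \<le> \<bar>B\<bar> * (b - a)^2"
    by (simp_all add: mult_right_mono)
  show ?thesis
  proof (cases "{x\<in>C. x \<in> {a..b}} = {}")
    case True
    then have off: "{a..b} \<subseteq> {0..1} - C"
      using sub by auto
    have "\<bar>trapezoid_cell_error h H a b\<bar> \<le> M * (b - a)^3 / 2"
    proof (rule trapezoid_cell_error_second_deriv[OF \<open>a \<le> b\<close>])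
      fix t assume "t \<in> {a..b}"
      then have t: "t \<in> {0..1} - C"
        using off by auto
      show "(H has_real_derivative h t) (at t within {a..b})"
        using DERIV_subset[OF H sub] t by simp
      show "(h has_real_derivative h' t) (at t within {a..b})"
        using DERIV_subset[OF deriv sub] t by simp
      show "(h' has_real_derivative h'' t) (at t within {a..b})"
        using DERIV_subset[OF deriv2 sub] t by simp
      show "\<bar>h'' t\<bar> \<le> M"
        using bound t by simp
    qed
    then show ?thesis
      unfolding True using M_term by simp
  next
    case False
    then have "1 \<le> real (card {x\<in>C. x \<in> {a..b}})"
      using \<open>finite C\<close> by (simp add: Suc_le_eq card_gt_0_iff)
    from mult_left_mono[OF this B_term(1)]
    have "\<bar>B\<bar> * (b - a)^2 \<le> \<bar>B\<bar> * (b - a)^2 * card {x\<in>C. x \<in> {a..b}}"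
      by simp
    moreover have "\<bar>trapezoid_cell_error h H a b\<bar> \<le> B * (b - a)^2 / 2"
    proof (rule trapezoid_cell_error_lipschitz[OF \<open>a \<le> b\<close>])
      fix t assume "t \<in> {a..b}"
      then show "(H has_real_derivative h t) (at t within {a..b})"
        using DERIV_subset[OF H sub] sub by auto
    next
      fix x y assume "x \<in> {a..b}" "y \<in> {a..b}"
      then show "\<bar>h x - h y\<bar> \<le> B * \<bar>x - y\<bar>"
        using lip sub by auto
    qed
    ultimately show ?thesis
      using M_term B_term by linarith
  qed
qed

lemma sum_lessThan_adjacent_pairs:
  fixes a :: "nat \<Rightarrow> 'a::comm_ring_1"
  assumes "n \<ge> 1"
  shows "(\<Sum>k<n. a k + a (Suc k)) = 2 * (\<Sum>k=1..<n. a k) + a 0 + a n"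
  using assms
proof (induction n rule: nat_induct_at_least)
  case (Suc n)
  then show ?case
    by (simp add: algebra_simps)
qed simp

lemma trapezoid_error_eq_sum_cell_errors:
  fixes f H :: "real \<Rightarrow> real"
  assumes "n \<ge> 1" and "H 0 = 0" and "H 1 = integral {0..1} f"
  shows "trapezoid_error f n
           = real n * (\<Sum>k<n. trapezoid_cell_error f H (real k / real n) (real (Suc k) / real n))"
proof -
  let ?x = "\<lambda>k. real k / real n"
  have "trapezoid_cell_error f H (?x k) (?x (Suc k))
          = (f (?x k) + f (?x (Suc k))) / (2 * real n) - (H (?x (Suc k)) - H (?x k))" for k
    using assms unfolding trapezoid_cell_error_def by (simp add: field_simps)
  then have "(\<Sum>k<n. trapezoid_cell_error f H (?x k) (?x (Suc k)))
          = (\<Sum>k<n. f (?x k) + f (?x (Suc k))) / (2 * real n) - (\<Sum>k<n. H (?x (Suc k)) - H (?x k))"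
    by (simp only: sum_subtractf sum_divide_distrib)
  also have "\<dots> = (2 * (\<Sum>k=1..<n. f (?x k)) + f 0 + f 1) / (2 * real n) - integral {0..1} f"
    using assms sum_lessThan_telescope[of "\<lambda>k. H (?x k)" n]
      sum_lessThan_adjacent_pairs[of n "\<lambda>k. f (?x k)"]
    by simp
  finally have cells: "(\<Sum>k<n. trapezoid_cell_error f H (?x k) (?x (Suc k)))
      = (2 * (\<Sum>k=1..<n. f (?x k)) + f 0 + f 1) / (2 * real n) - integral {0..1} f" .
  show ?thesis
    unfolding trapezoid_error_def cells using assms by (simp add: field_simps)
qed

lemma card_unit_intervals_containing_le:
  fixes y :: real
  shows "card {k\<in>K. real k \<le> y \<and> y \<le> real k + 1} \<le> 2"
proof -
  have "{k\<in>K. real k \<le> y \<and> y \<le> real k + 1} \<subseteq> {nat \<lfloor>y\<rfloor>, nat \<lfloor>y\<rfloor> - 1}"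
  proof
    fix k assume "k \<in> {k\<in>K. real k \<le> y \<and> y \<le> real k + 1}"
    then have "int k \<le> \<lfloor>y\<rfloor>" "\<lfloor>y\<rfloor> \<le> int k + 1"
      by (simp_all add: le_floor_iff floor_le_iff)
    then show "k \<in> {nat \<lfloor>y\<rfloor>, nat \<lfloor>y\<rfloor> - 1}"
      by auto
  qed
  then have "card {k\<in>K. real k \<le> y \<and> y \<le> real k + 1} \<le> card {nat \<lfloor>y\<rfloor>, nat \<lfloor>y\<rfloor> - 1}"
    by (intro card_mono) auto
  also have "\<dots> \<le> 2"
    by (simp add: card_insert_if)
  finally show ?thesis .
qed

lemma sum_card_cells_containing_le:
  assumes "finite C"
  shows "(\<Sum>k<n. card {x\<in>C. x \<in> {real k / real n..real (Suc k) / real n}}) \<le> 2 * card C"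
proof -
  have "(\<Sum>k<n. card {x\<in>C. x \<in> {real k / real n..real (Suc k) / real n}})
          = (\<Sum>x\<in>C. card {k\<in>{..<n}. x \<in> {real k / real n..real (Suc k) / real n}})"
    by (rule sum_multicount_gen) (use assms in auto)
  also have "\<dots> \<le> (\<Sum>x\<in>C. 2)"
  proof (rule sum_mono)
    fix x
    show "card {k\<in>{..<n}. x \<in> {real k / real n..real (Suc k) / real n}} \<le> 2"
    proof (cases "n = 0")
      case False
      then have "{k\<in>{..<n}. x \<in> {real k / real n..real (Suc k) / real n}}
                   = {k\<in>{..<n}. real k \<le> real n * x \<and> real n * x \<le> real k + 1}"
        by (auto simp: field_simps)
      then show ?thesis
        using card_unit_intervals_containing_le[of "{..<n}" "real n * x"] by simp
    qed simp
  qed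
  finally show ?thesis
    by simp
qed

lemma trapezoid_error_abs_le:
  fixes h h' h'' :: "real \<Rightarrow> real"
  assumes "finite C" and cont: "continuous_on {0..1} h"
    and deriv: "\<And>x. x \<in> {0..1} - C \<Longrightarrow> (h has_real_derivative h' x) (at x within {0..1})"
    and deriv2: "\<And>x. x \<in> {0..1} - C \<Longrightarrow> (h' has_real_derivative h'' x) (at x within {0..1})"
    and bound: "\<And>x. x \<in> {0..1} - C \<Longrightarrow> \<bar>h'' x\<bar> \<le> M"
    and deriv_bound: "\<And>x. x \<in> {0..1} - C \<Longrightarrow> \<bar>h' x\<bar> \<le> B"
    and "n \<ge> 1"
  shows "\<bar>trapezoid_error h n\<bar> \<le> (\<bar>M\<bar> + 2 * \<bar>B\<bar> * card C) / real n"
proof -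
  have lip: "\<bar>h x - h y\<bar> \<le> B * \<bar>x - y\<bar>" if "x \<in> {0..1}" "y \<in> {0..1}" for x y
    using lipschitz_of_deriv_bound_off_finite[OF \<open>finite C\<close> cont deriv deriv_bound that] .
  define H where "H x = integral {0..x} h" for x
  have H: "(H has_real_derivative h t) (at t within {0..1})" if "t \<in> {0..1}" for t
    unfolding H_def by (rule integral_has_real_derivative[OF cont that])
  define \<delta> where "\<delta> = 1 / real n"
  let ?x = "\<lambda>k. real k / real n"
  let ?cell = "\<lambda>k. trapezoid_cell_error h H (?x k) (?x (Suc k))"
  let ?count = "\<lambda>k. real (card {x\<in>C. x \<in> {?x k..?x (Suc k)}})"
  have n\<delta>: "real n * \<delta> = 1" "0 \<le> \<delta>"
    using \<open>n \<ge> 1\<close> by (simp_all add: \<delta>_def)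
  have "\<bar>?cell k\<bar> \<le> \<bar>M\<bar> * \<delta>^3 + \<bar>B\<bar> * \<delta>^2 * ?count k" if "k < n" for k
  proof -
    have width: "?x (Suc k) - ?x k = \<delta>"
      by (simp add: \<delta>_def diff_divide_distrib[symmetric])
    have "0 \<le> ?x k" "?x k \<le> ?x (Suc k)" "?x (Suc k) \<le> 1"
      using \<open>k < n\<close> by (simp_all add: divide_right_mono)
    from trapezoid_cell_error_le[OF \<open>finite C\<close> H deriv deriv2 bound lip this, unfolded width]
    show ?thesis .
  qed
  then have "\<bar>\<Sum>k<n. ?cell k\<bar> \<le> (\<Sum>k<n. \<bar>M\<bar> * \<delta>^3 + \<bar>B\<bar> * \<delta>^2 * ?count k)"
    by (intro order_trans[OF sum_abs sum_mono]) simp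
  also have "\<dots> = real n * \<bar>M\<bar> * \<delta>^3 + \<bar>B\<bar> * \<delta>^2 * (\<Sum>k<n. ?count k)"
    by (simp add: sum.distrib sum_distrib_left)
  also have "\<dots> \<le> real n * \<bar>M\<bar> * \<delta>^3 + \<bar>B\<bar> * \<delta>^2 * (2 * card C)"
    using sum_card_cells_containing_le[OF \<open>finite C\<close>, of n] n\<delta>(2)
    by (intro add_left_mono mult_left_mono) (simp_all flip: of_nat_sum)
  finally have "real n * \<bar>\<Sum>k<n. ?cell k\<bar>
      \<le> real n * (real n * \<bar>M\<bar> * \<delta>^3 + \<bar>B\<bar> * \<delta>^2 * (2 * card C))"
    by (rule mult_left_mono) simp
  also have "\<dots> = (real n * \<delta>)^2 * \<bar>M\<bar> * \<delta> + (real n * \<delta>) * \<bar>B\<bar> * \<delta> * (2 * card C)"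
    by (simp add: power2_eq_square power3_eq_cube algebra_simps)
  also have "\<dots> = (\<bar>M\<bar> + 2 * \<bar>B\<bar> * card C) * \<delta>"
    unfolding n\<delta>(1) by (simp add: algebra_simps)
  finally have "real n * \<bar>\<Sum>k<n. ?cell k\<bar> \<le> (\<bar>M\<bar> + 2 * \<bar>B\<bar> * card C) * \<delta>" .
  moreover have "trapezoid_error h n = real n * (\<Sum>k<n. ?cell k)"
    by (rule trapezoid_error_eq_sum_cell_errors) (use \<open>n \<ge> 1\<close> in \<open>simp_all add: H_def\<close>)
  ultimately show ?thesis
    unfolding \<delta>_def by (simp add: abs_mult)
qed

lemma trapezoid_error_bigo:
  fixes h h' h'' :: "real \<Rightarrow> real"
  assumes "finite C" and cont: "continuous_on {0..1} h"
    and deriv: "\<And>x. x \<in> {0..1} - C \<Longrightarrow> (h has_real_derivative h' x) (at x within {0..1})"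
    and deriv2: "\<And>x. x \<in> {0..1} - C \<Longrightarrow> (h' has_real_derivative h'' x) (at x within {0..1})"
    and bound: "\<And>x. x \<in> {0..1} - C \<Longrightarrow> \<bar>h'' x\<bar> \<le> M"
  shows "trapezoid_error h \<in> O(\<lambda>n. 1 / real n)"
proof -
  obtain B where B: "\<And>x. x \<in> {0..1} - C \<Longrightarrow> \<bar>h' x\<bar> \<le> B"
    using bounded_deriv_off_finite[OF \<open>finite C\<close> deriv2 bound] by blast
  have "\<forall>\<^sub>F n in at_top.
      norm (trapezoid_error h n) \<le> (\<bar>M\<bar> + 2 * \<bar>B\<bar> * card C) * norm (1 / real n)"
    using eventually_ge_at_top[of "1::nat"]
    by eventually_elim (use trapezoid_error_abs_le[OF \<open>finite C\<close> cont deriv deriv2 bound B] in auto)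
  then show ?thesis
    by (rule bigoI)
qed

section \<open>Step functions\<close>

definition step_at :: "real \<Rightarrow> real \<Rightarrow> real \<Rightarrow> real \<Rightarrow> real" where
  "step_at c v d x = (if x < c then 0 else if x = c then v else d)"

lemma step_at_has_derivative_zero:
  assumes "x \<noteq> c"
  shows "(step_at c v d has_real_derivative 0) (at x within S)"
proof -
  have "\<forall>\<^sub>F y in nhds x. step_at c v d y = step_at c v d x"
  proof (cases "x < c")
    case True
    then show ?thesis
      using eventually_nhds_in_open[of "{..<c}" x]
      by (auto simp: step_at_def elim!: eventually_mono)
  next
    case False
    with assms have "x \<in> {c<..}" by auto
    then show ?thesis
      using eventually_nhds_in_open[of "{c<..}" x]
      by (auto simp: step_at_def elim!: eventually_mono)
  qed
  then have "(step_at c v d has_real_derivative 0) (at x)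
      \<longleftrightarrow> ((\<lambda>_. step_at c v d x) has_real_derivative 0) (at x)"
    by (intro DERIV_cong_ev) simp_all
  then have "(step_at c v d has_real_derivative 0) (at x)"
    by simp
  then show ?thesis
    by (rule has_field_derivative_at_within)
qed

lemma isCont_step_at: "x \<noteq> c \<Longrightarrow> isCont (step_at c v d) x"
  using step_at_has_derivative_zero DERIV_isCont by blast

lemma step_at_tendsto_left: "(step_at c v d \<longlongrightarrow> 0) (at_left c)"
proof (rule tendsto_eventually)
  show "\<forall>\<^sub>F x in at_left c. step_at c v d x = 0"
    using eventually_at_left_real[of "c - 1" c] by (auto simp: step_at_def elim!: eventually_mono)
qed

lemma step_at_tendsto_right: "(step_at c v d \<longlongrightarrow> d) (at_right c)"
proof (rule tendsto_eventually)
  show "\<forall>\<^sub>F x in at_right c. step_at c v d x = d"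
    using eventually_at_right_real[of c "c + 1"] by (auto simp: step_at_def elim!: eventually_mono)
qed

lemma has_integral_step_at:
  assumes "0 \<le> c" "c \<le> 1"
  shows "(step_at c v d has_integral d * (1 - c)) {0..1}"
proof -
  have "((\<lambda>_. d) has_integral d * (1 - c)) {c..1}"
    using has_integral_const_real[of d c 1] assms by (simp add: mult.commute)
  then have restricted: "((\<lambda>x. if x \<in> {c..1} then d else 0) has_integral d * (1 - c)) {0..1}"
    using has_integral_restrict_closed_subinterval[of "\<lambda>_. d" _ c 1 0 1] assms by simp
  show ?thesis
    by (rule has_integral_spike_finite[OF _ _ restricted, where S="{c}"]) (auto simp: step_at_def)
qed

lemma card_range_greater_real:
  fixes y :: real
  assumes "0 \<le> y" "y < real n"
  shows "real (card {k\<in>{1..<n}. y < real k}) = real n - 1 - of_int \<lfloor>y\<rfloor>"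
proof -
  have "{k\<in>{1..<n}. y < real k} = {nat \<lfloor>y\<rfloor> + 1..<n}"
    using assms by (auto simp: Suc_le_eq floor_less_iff nat_less_iff)
  moreover have "nat \<lfloor>y\<rfloor> < n"
    using assms by linarith
  ultimately show ?thesis
    using assms by (simp add: of_nat_diff)
qed

lemma card_range_at_least_real:
  fixes y :: real
  assumes "0 < y" "y < real n"
  shows "real (card {k\<in>{1..<n}. y \<le> real k}) = real n - of_int \<lceil>y\<rceil>"
proof -
  have "{k\<in>{1..<n}. y \<le> real k} = {nat \<lceil>y\<rceil>..<n}"
    using assms by (auto simp: ceiling_le_iff nat_le_iff)
  moreover have "nat \<lceil>y\<rceil> \<le> n"
    using assms by linarith
  ultimately show ?thesis
    using assms by (simp add: of_nat_diff)
qed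

lemma trapezoid_error_step_at_left:
  assumes "0 < c" "c < 1" "n \<ge> 1"
  shows "trapezoid_error (step_at c 0 d) n = (frac (real n * c) - 1/2) * d"
proof -
  have "(\<Sum>k=1..<n. step_at c 0 d (real k / real n))
      = (\<Sum>k\<in>{1..<n}. if real n * c < real k then d else 0)"
    using assms by (intro sum.cong) (auto simp: step_at_def field_simps)
  also have "\<dots> = d * real (card {k\<in>{1..<n}. real n * c < real k})"
    by (simp add: sum.inter_filter[symmetric])
  also have "\<dots> = d * (real n - 1 - of_int \<lfloor>real n * c\<rfloor>)"
    using assms by (subst card_range_greater_real) auto
  finally have sum_eq:
    "(\<Sum>k=1..<n. step_at c 0 d (real k / real n)) = d * (real n - 1 - of_int \<lfloor>real n * c\<rfloor>)" .
  have integral_eq: "integral {0..1} (step_at c 0 d) = d * (1 - c)"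
    using assms by (intro integral_unique has_integral_step_at) auto
  have "step_at c 0 d 0 = 0" "step_at c 0 d 1 = d"
    using assms by (auto simp: step_at_def)
  then show ?thesis
    unfolding trapezoid_error_def sum_eq integral_eq by (simp add: frac_def algebra_simps)
qed

lemma trapezoid_error_step_at_right:
  assumes "0 < c" "c < 1" "n \<ge> 1"
  shows "trapezoid_error (step_at c d d) n = (frac' (real n * c) - 1/2) * d"
proof -
  have "(\<Sum>k=1..<n. step_at c d d (real k / real n))
      = (\<Sum>k\<in>{1..<n}. if real n * c \<le> real k then d else 0)"
    using assms by (intro sum.cong) (auto simp: step_at_def field_simps)
  also have "\<dots> = d * real (card {k\<in>{1..<n}. real n * c \<le> real k})"
    by (simp add: sum.inter_filter[symmetric])
  also have "\<dots> = d * (real n - of_int \<lceil>real n * c\<rceil>)"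
    using assms by (subst card_range_at_least_real) auto
  finally have sum_eq:
    "(\<Sum>k=1..<n. step_at c d d (real k / real n)) = d * (real n - of_int \<lceil>real n * c\<rceil>)" .
  have integral_eq: "integral {0..1} (step_at c d d) = d * (1 - c)"
    using assms by (intro integral_unique has_integral_step_at) auto
  have "step_at c d d 0 = 0" "step_at c d d 1 = d"
    using assms by (auto simp: step_at_def)
  then show ?thesis
    unfolding trapezoid_error_def sum_eq integral_eq by (simp add: frac'_def algebra_simps)
qed

lemma isCont_remove_jump:
  fixes g :: "real \<Rightarrow> real"
  assumes "(g \<longlongrightarrow> l) (at_left c)" and "(g \<longlongrightarrow> l') (at_right c)"
  shows "isCont (\<lambda>x. g x - step_at c (g c - l) (l' - l) x) c"
proof -
  have "((\<lambda>x. g x - step_at c (g c - l) (l' - l) x) \<longlongrightarrow> l) (at_left c)"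
    using tendsto_diff[OF assms(1) step_at_tendsto_left[of c "g c - l" "l' - l"]] by simp
  moreover have "((\<lambda>x. g x - step_at c (g c - l) (l' - l) x) \<longlongrightarrow> l) (at_right c)"
    using tendsto_diff[OF assms(2) step_at_tendsto_right[of c "g c - l" "l' - l"]] by simp
  ultimately show ?thesis
    unfolding isCont_def by (simp add: step_at_def filterlim_split_at)
qed

lemma continuous_on_remove_jumps:
  fixes g :: "real \<Rightarrow> real" and c gl gr :: "'i \<Rightarrow> real"
  assumes "finite J" and "inj_on c J"
    and left: "\<And>j. j \<in> J \<Longrightarrow> (g \<longlongrightarrow> gl j) (at_left (c j))"
    and right: "\<And>j. j \<in> J \<Longrightarrow> (g \<longlongrightarrow> gr j) (at_right (c j))"
    and cont: "\<And>x. x \<in> S - c ` J \<Longrightarrow> continuous (at x within S) g"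
  shows "continuous_on S (\<lambda>x. g x - (\<Sum>j\<in>J. step_at (c j) (g (c j) - gl j) (gr j - gl j) x))"
    (is "continuous_on S (\<lambda>x. g x - (\<Sum>j\<in>J. ?s j x))")
  unfolding continuous_on_eq_continuous_within
proof
  fix x assume "x \<in> S"
  show "continuous (at x within S) (\<lambda>x. g x - (\<Sum>j\<in>J. ?s j x))"
  proof (cases "x \<in> c ` J")
    case False
    then have "continuous (at x within S) g"
      using cont \<open>x \<in> S\<close> by blast
    moreover have "isCont (\<lambda>y. \<Sum>j\<in>J. ?s j y) x"
      using False by (intro continuous_sum isCont_step_at) auto
    then have "continuous (at x within S) (\<lambda>y. \<Sum>j\<in>J. ?s j y)"
      by (rule continuous_at_imp_continuous_at_within)
    ultimately show ?thesis
      by (rule continuous_diff)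
  next
    case True
    then obtain i where i: "i \<in> J" "x = c i" by auto
    have split: "(\<lambda>y. g y - (\<Sum>j\<in>J. ?s j y)) = (\<lambda>y. (g y - ?s i y) - (\<Sum>j\<in>J - {i}. ?s j y))"
      by (simp add: fun_eq_iff sum.remove[OF \<open>finite J\<close> i(1)])
    have "isCont (\<lambda>y. g y - ?s i y) x"
      using isCont_remove_jump[OF left right] i by simp
    moreover have "isCont (\<lambda>y. \<Sum>j\<in>J - {i}. ?s j y) x"
      using i \<open>inj_on c J\<close> by (intro continuous_sum isCont_step_at) (auto dest: inj_onD)
    ultimately have "isCont (\<lambda>y. (g y - ?s i y) - (\<Sum>j\<in>J - {i}. ?s j y)) x"
      by (rule continuous_diff)
    then show ?thesis
      unfolding split by (rule continuous_at_imp_continuous_at_within)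
  qed
qed

lemma continuous_left_limit_eq:
  fixes f :: "real \<Rightarrow> 'a::t2_space"
  assumes "continuous (at_left x) f" and "(f \<longlongrightarrow> l) (at_left x)"
  shows "f x = l"
  using assms tendsto_unique[OF trivial_limit_at_left_real] by (auto simp: continuous_within)

lemma continuous_right_limit_eq:
  fixes f :: "real \<Rightarrow> 'a::t2_space"
  assumes "continuous (at_right x) f" and "(f \<longlongrightarrow> l) (at_right x)"
  shows "f x = l"
  using assms tendsto_unique[OF trivial_limit_at_right_real] by (auto simp: continuous_within)

lemma trapezoid_error_remove_jumps_bigo:
  fixes g g' g'' :: "real \<Rightarrow> real" and c gl gr :: "'i \<Rightarrow> real"
  assumes "finite J" and "inj_on c J" and c_range: "\<And>j. j \<in> J \<Longrightarrow> 0 \<le> c j \<and> c j \<le> 1"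
    and deriv: "\<And>x. x \<in> {0..1} - c ` J \<Longrightarrow> (g has_real_derivative g' x) (at x within {0..1})"
    and deriv2: "\<And>x. x \<in> {0..1} - c ` J \<Longrightarrow> (g' has_real_derivative g'' x) (at x within {0..1})"
    and bound: "\<And>x. x \<in> {0..1} - c ` J \<Longrightarrow> \<bar>g'' x\<bar> \<le> M"
    and left: "\<And>j. j \<in> J \<Longrightarrow> (g \<longlongrightarrow> gl j) (at_left (c j))"
    and right: "\<And>j. j \<in> J \<Longrightarrow> (g \<longlongrightarrow> gr j) (at_right (c j))"
  shows "(\<lambda>n. trapezoid_error g n
            - (\<Sum>j\<in>J. trapezoid_error (step_at (c j) (g (c j) - gl j) (gr j - gl j)) n))
         \<in> O(\<lambda>n. 1 / real n)"
proof -
  define s where "s j = step_at (c j) (g (c j) - gl j) (gr j - gl j)" for j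
  define h where "h x = g x - (\<Sum>j\<in>J. s j x)" for x
  have cont: "continuous_on {0..1} h"
    unfolding h_def s_def
    by (rule continuous_on_remove_jumps[OF \<open>finite J\<close> \<open>inj_on c J\<close> left right])
      (use deriv in \<open>auto intro: DERIV_continuous\<close>)
  have "(h has_real_derivative g' x) (at x within {0..1})" if "x \<in> {0..1} - c ` J" for x
  proof -
    have "((\<lambda>x. \<Sum>j\<in>J. s j x) has_real_derivative (\<Sum>j\<in>J. 0)) (at x within {0..1})"
      using that by (intro DERIV_sum) (auto simp: s_def intro!: step_at_has_derivative_zero)
    from DERIV_diff[OF deriv[OF that] this] show ?thesis
      unfolding h_def by simp
  qed
  then have "trapezoid_error h \<in> O(\<lambda>n. 1 / real n)"
    by (intro trapezoid_error_bigo[OF _ cont _ deriv2 bound]) (use \<open>finite J\<close> in auto)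
  moreover have "trapezoid_error g n = trapezoid_error h n + (\<Sum>j\<in>J. trapezoid_error (s j) n)" for n
  proof -
    have "s j integrable_on {0..1}" if "j \<in> J" for j
      unfolding s_def using c_range[OF that] has_integral_integrable[OF has_integral_step_at]
      by blast
    moreover have g_eq: "(\<lambda>x. h x + (\<Sum>j\<in>J. s j x)) = g"
      by (simp add: h_def)
    ultimately show ?thesis
      using trapezoid_error_add_sum[OF integrable_continuous_real[OF cont] \<open>finite J\<close>, of s n]
      by (simp only: g_eq)
  qed
  ultimately show ?thesis
    by (simp add: s_def)
qed

lemma riemann_sum_jump_expansion:
  fixes g g' g'' :: "real \<Rightarrow> real" and c gl gr :: "'i \<Rightarrow> real" and F :: "nat \<Rightarrow> 'i \<Rightarrow> real"
  assumes "finite J" and "inj_on c J" and "\<And>j. j \<in> J \<Longrightarrow> 0 \<le> c j \<and> c j \<le> 1"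
    and "\<And>x. x \<in> {0..1} - c ` J \<Longrightarrow> (g has_real_derivative g' x) (at x within {0..1})"
    and "\<And>x. x \<in> {0..1} - c ` J \<Longrightarrow> (g' has_real_derivative g'' x) (at x within {0..1})"
    and "\<And>x. x \<in> {0..1} - c ` J \<Longrightarrow> \<bar>g'' x\<bar> \<le> M"
    and "\<And>j. j \<in> J \<Longrightarrow> (g \<longlongrightarrow> gl j) (at_left (c j))"
    and "\<And>j. j \<in> J \<Longrightarrow> (g \<longlongrightarrow> gr j) (at_right (c j))"
    and jump_term: "\<And>n j. n \<ge> 1 \<Longrightarrow> j \<in> J \<Longrightarrow>
      trapezoid_error (step_at (c j) (g (c j) - gl j) (gr j - gl j)) n
        = (F n j - 1/2) * (gr j - gl j)"
  shows "(\<lambda>n. (\<Sum>k=1..<n. g (real k / real n))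
            - (real n * integral {0..1} g - (g 0 + g 1) / 2
               + (\<Sum>j\<in>J. (F n j - 1/2) * (gr j - gl j))))
         \<in> O(\<lambda>n. 1 / real n)"
proof -
  have "\<forall>\<^sub>F n in at_top. (\<Sum>k=1..<n. g (real k / real n))
      - (real n * integral {0..1} g - (g 0 + g 1) / 2 + (\<Sum>j\<in>J. (F n j - 1/2) * (gr j - gl j)))
      = trapezoid_error g n
        - (\<Sum>j\<in>J. trapezoid_error (step_at (c j) (g (c j) - gl j) (gr j - gl j)) n)"
    using eventually_ge_at_top[of "1::nat"]
    by eventually_elim (simp add: jump_term trapezoid_error_def[of g])
  from landau_o.big.in_cong[OF this] trapezoid_error_remove_jumps_bigo[OF assms(1-8)]
  show ?thesis
    by simp
qed

theorem lemma2p2: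
  fixes g :: "real \<Rightarrow> real" and c :: "nat \<Rightarrow> real" and r :: nat
    and gl gr :: "nat \<Rightarrow> real"
  assumes c_mono: "strict_mono_on {1..r} c"
    and c_range: "\<forall>j\<in>{1..r}. 0 < c j \<and> c j < 1"
    and smooth: "\<exists>g' g'' M. \<forall>x\<in>{0..1} - c ` {1..r}.
        (g has_real_derivative g' x) (at x within {0..1}) \<and>
        (g' has_real_derivative g'' x) (at x within {0..1}) \<and> \<bar>g'' x\<bar> \<le> M"
    and lim_left: "\<forall>j\<in>{1..r}. (g \<longlongrightarrow> gl j) (at_left (c j))"
    and lim_right: "\<forall>j\<in>{1..r}. (g \<longlongrightarrow> gr j) (at_right (c j))"
    and jump: "\<forall>j\<in>{1..r}. gl j \<noteq> gr j"
  shows "((\<forall>j\<in>{1..r}. continuous (at_left (c j)) g) \<longrightarrow>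
           (\<lambda>n::nat. (\<Sum>k=1..<n. g (real k / real n))
              - (real n * integral {0..1} g - (g 0 + g 1) / 2
                 + (\<Sum>j=1..r. (frac (real n * c j) - 1/2) * (gr j - gl j))))
           \<in> O(\<lambda>n. 1 / real n))
       \<and> ((\<forall>j\<in>{1..r}. continuous (at_right (c j)) g) \<longrightarrow>
           (\<lambda>n::nat. (\<Sum>k=1..<n. g (real k / real n))
              - (real n * integral {0..1} g - (g 0 + g 1) / 2
                 + (\<Sum>j=1..r. (frac' (real n * c j) - 1/2) * (gr j - gl j))))
           \<in> O(\<lambda>n. 1 / real n))"
proof -
  obtain g' g'' M where smooth': "\<forall>x\<in>{0..1} - c ` {1..r}.
      (g has_real_derivative g' x) (at x within {0..1}) \<and>
      (g' has_real_derivative g'' x) (at x within {0..1}) \<and> \<bar>g'' x\<bar> \<le> M"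
    using smooth by blast
  let ?s = "\<lambda>j. step_at (c j) (g (c j) - gl j) (gr j - gl j)"
  have expansion: "(\<lambda>n. (\<Sum>k=1..<n. g (real k / real n))
      - (real n * integral {0..1} g - (g 0 + g 1) / 2 + (\<Sum>j=1..r. (F n j - 1/2) * (gr j - gl j))))
      \<in> O(\<lambda>n. 1 / real n)"
    if "\<And>n j. n \<ge> 1 \<Longrightarrow> j \<in> {1..r} \<Longrightarrow> trapezoid_error (?s j) n = (F n j - 1/2) * (gr j - gl j)"
    for F :: "nat \<Rightarrow> nat \<Rightarrow> real"
    using that c_range smooth' lim_left lim_right strict_mono_on_imp_inj_on[OF c_mono]
    by (intro riemann_sum_jump_expansion[where g' = g' and g'' = g'' and M = M])
      (auto simp: less_imp_le)
  show ?thesis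
  proof (intro conjI impI expansion)
    fix n j :: nat assume "\<forall>j\<in>{1..r}. continuous (at_left (c j)) g" "n \<ge> 1" "j \<in> {1..r}"
    then have "g (c j) = gl j"
      using lim_left continuous_left_limit_eq by blast
    then show "trapezoid_error (?s j) n = (frac (real n * c j) - 1/2) * (gr j - gl j)"
      using c_range \<open>n \<ge> 1\<close> \<open>j \<in> {1..r}\<close> by (simp add: trapezoid_error_step_at_left)
  next
    fix n j :: nat assume "\<forall>j\<in>{1..r}. continuous (at_right (c j)) g" "n \<ge> 1" "j \<in> {1..r}"
    then have "g (c j) = gr j"
      using lim_right continuous_right_limit_eq by blast
    then show "trapezoid_error (?s j) n = (frac' (real n * c j) - 1/2) * (gr j - gl j)"
      using c_range \<open>n \<ge> 1\<close> \<open>j \<in> {1..r}\<close> by (simp add: trapezoid_error_step_at_right)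
  qed
qed

end
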